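(* If $(G,\sigma)$ is a signed graph and $(F,\pi)$ is a signed forest with at least one edge, then $\chi_s((G,\sigma)\,\square\,(F,\pi))=\chi_s((G,\sigma)\,\square\,K_2^+)$. In particular, for all integers $n,m\ge 2$ and all signatures $\sigma_1$ of $P_n$ and $\sigma_2$ of $P_m$, $\chi_s((P_n,\sigma_1)\,\square\,(P_m,\sigma_2))=2$.
   Context: A signed graph $(G,\sigma)$ is a simple loopless undirected graph $G$ with a signature $\sigma:E(G)\to\{+1,-1\}$. Switching a vertex $v$ negates the sign of every edge incident to $v$; two signatures are equivalent if one is obtained from the other by switching a set of vertices. A homomorphism of $(G,\sigma)$ to $(H,\pi)$ is a graph homomorphism $\varphi:G\to H$ for which there is a signature $\sigma'$ equivalent to $\sigma$ with $\pi(\varphi(u)\varphi(v))=\sigma'(uv)$ for every edge $uv$ of $G$. $\chi_s(G,\sigma)$ is the smallest order of a signed graph to which $(G,\sigma)$ admits a homomorphism. The Cartesian product $(G,\sigma)\,\square\,(H,\pi)$ has vertex set $V(G)\times V(H)$, and $(u_1,v_1)(u_2,v_2)$ is an edge of sign $s$ iff either $u_1=u_2$ and $v_1v_2\in E(H)$ with $\pi(v_1v_2)=s$, or $v_1=v_2$ and $u_1u_2\in E(G)$ with $\sigma(u_1u_2)=s$. $K_2^+$ is a single positive edge; $P_n$ is the path on $n$ vertices. *)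

theory Defs
  imports Main
begin

text \<open>A signed graph: finite vertex set, a set of edges (2-element subsets of the
vertex set) and a signature taking values +1 / -1 on edges (values on non-edges
are irrelevant).\<close>

record 'a sgraph =
  verts :: "'a set"
  edges :: "'a set set"
  sgn   :: "'a set \<Rightarrow> int"

definition signed_graph :: "('a, 'z) sgraph_scheme \<Rightarrow> bool" where
  "signed_graph G \<longleftrightarrow> finite (verts G) \<and>
     (\<forall>e\<in>edges G. \<exists>u v. e = {u, v} \<and> u \<noteq> v \<and> u \<in> verts G \<and> v \<in> verts G) \<and>
     (\<forall>e\<in>edges G. sgn G e = 1 \<or> sgn G e = -1)"

text \<open>Switching the vertices of a set X: an edge changes sign iff exactly one
of its endpoints lies in X.\<close>
definition switch :: "'a set \<Rightarrow> ('a set \<Rightarrow> int) \<Rightarrow> 'a set \<Rightarrow> int" where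
  "switch X s e = (if odd (card (e \<inter> X)) then - s e else s e)"

text \<open>Signed graph homomorphism: a graph homomorphism phi together with an
equivalent signature (obtained by switching a set X of vertices) under which
edge signs are preserved.\<close>
definition signed_hom :: "('a \<Rightarrow> 'b) \<Rightarrow> 'a sgraph \<Rightarrow> 'b sgraph \<Rightarrow> bool" where
  "signed_hom \<phi> G H \<longleftrightarrow> (\<forall>v\<in>verts G. \<phi> v \<in> verts H) \<and>
     (\<exists>X\<subseteq>verts G. \<forall>e\<in>edges G. \<phi> ` e \<in> edges H \<and>
          sgn H (\<phi> ` e) = switch X (sgn G) e)"

text \<open>Signed chromatic number: least order of a signed graph to which G maps.
Every finite signed graph is isomorphic to one on vertex set {0..<k}.\<close>
definition chi_s :: "'a sgraph \<Rightarrow> nat" where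
  "chi_s G = (LEAST k. \<exists>(H :: nat sgraph) \<phi>. signed_graph H \<and> verts H = {..<k} \<and>
                         signed_hom \<phi> G H)"

definition cprod :: "'a sgraph \<Rightarrow> 'b sgraph \<Rightarrow> ('a \<times> 'b) sgraph" where
  "cprod G H = \<lparr> verts = verts G \<times> verts H,
     edges = {{(u, v1), (u, v2)} | u v1 v2. u \<in> verts G \<and> {v1, v2} \<in> edges H}
           \<union> {{(u1, v), (u2, v)} | u1 u2 v. v \<in> verts H \<and> {u1, u2} \<in> edges G},
     sgn = (\<lambda>e. if card (fst ` e) = 1 then sgn H (snd ` e) else sgn G (fst ` e)) \<rparr>"

definition has_cycle :: "'a sgraph \<Rightarrow> bool" where
  "has_cycle G \<longleftrightarrow> (\<exists>xs. length xs \<ge> 3 \<and> distinct xs \<and> set xs \<subseteq> verts G \<and>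
      (\<forall>i. Suc i < length xs \<longrightarrow> {xs ! i, xs ! Suc i} \<in> edges G) \<and>
      {last xs, hd xs} \<in> edges G)"

definition signed_forest :: "'a sgraph \<Rightarrow> bool" where
  "signed_forest F \<longleftrightarrow> signed_graph F \<and> \<not> has_cycle F"

definition K2plus :: "nat sgraph" where
  "K2plus = \<lparr> verts = {0, 1}, edges = {{0, 1}}, sgn = (\<lambda>_. 1) \<rparr>"

definition path_sg :: "nat \<Rightarrow> (nat set \<Rightarrow> int) \<Rightarrow> nat sgraph" where
  "path_sg n s = \<lparr> verts = {..<n}, edges = {{i, Suc i} | i. Suc i < n}, sgn = s \<rparr>"

end

theory Submission
  imports Defs
begin

text \<open>A signed forest \<open>F\<close> with an edge is homomorphically equivalent to \<open>K\<^sub>2\<^sup>+\<close>.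
  It maps to \<open>K\<^sub>2\<^sup>+\<close> because it is bipartite and, having no cycles, balanced: peeling off
  leaves, every \<open>\<plusminus>1\<close> edge labelling of a forest is induced by a vertex labelling, which gives
  both the 2-colouring and the switching that makes all edges positive. Conversely
  \<open>K\<^sub>2\<^sup>+\<close> maps onto any edge of \<open>F\<close>. Homomorphisms of the right factor lift to Cartesian
  products with \<open>G\<close>, and homomorphically equivalent signed graphs have the same \<open>\<chi>\<^sub>s\<close>.

  For two signed paths, a 2-colouring and an all-positive switching of each factor combine by
  exclusive or into the same data for the product, which therefore maps to \<open>K\<^sub>2\<^sup>+\<close>; having an
  edge, it has \<open>\<chi>\<^sub>s = 2\<close>.\<close>

lemma signed_graph_edgeE:
  assumes "signed_graph G" "e \<in> edges G"
  obtains u v where "e = {u, v}" "u \<noteq> v" "u \<in> verts G" "v \<in> verts G"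
  using assms unfolding signed_graph_def by blast

lemma signed_graph_edgeD:
  assumes "signed_graph G" "{u, v} \<in> edges G"
  shows "u \<noteq> v" "u \<in> verts G" "v \<in> verts G"
  using signed_graph_edgeE[OF assms] by (metis doubleton_eq_iff)+

lemma signed_graph_sgn:
  "signed_graph G \<Longrightarrow> e \<in> edges G \<Longrightarrow> sgn G e = 1 \<or> sgn G e = -1"
  unfolding signed_graph_def by blast

lemma signed_graph_finite_edges:
  assumes "signed_graph G"
  shows "finite (edges G)"
proof -
  have "edges G \<subseteq> Pow (verts G)"
    using assms by (auto elim: signed_graph_edgeE)
  moreover have "finite (verts G)"
    using assms unfolding signed_graph_def by blast
  ultimately show ?thesis
    by (meson finite_Pow_iff finite_subset)
qed

lemma switch_doubleton:
  "u \<noteq> v \<Longrightarrow> switch X s {u, v} = (if (u \<in> X) = (v \<in> X) then s {u, v} else - s {u, v})"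
  unfolding switch_def by (cases "u \<in> X"; cases "v \<in> X") (auto simp: Int_insert_left)

lemma cprod_verts: "verts (cprod G H) = verts G \<times> verts H"
  by (simp add: cprod_def)

lemma cprod_edges: "e \<in> edges (cprod G H) \<longleftrightarrow>
    (\<exists>u v1 v2. e = {(u, v1), (u, v2)} \<and> u \<in> verts G \<and> {v1, v2} \<in> edges H) \<or>
    (\<exists>u1 u2 v. e = {(u1, v), (u2, v)} \<and> v \<in> verts H \<and> {u1, u2} \<in> edges G)"
  by (auto simp: cprod_def)

lemma cprod_edgeE:
  assumes "e \<in> edges (cprod G H)"
  obtains (right) u v1 v2 where "e = {(u, v1), (u, v2)}" "u \<in> verts G" "{v1, v2} \<in> edges H"
    | (left) u1 u2 v where "e = {(u1, v), (u2, v)}" "v \<in> verts H" "{u1, u2} \<in> edges G"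
  using assms unfolding cprod_edges by blast

lemma cprod_sgn_right_edge: "v1 \<noteq> v2 \<Longrightarrow> sgn (cprod G H) {(u, v1), (u, v2)} = sgn H {v1, v2}"
  by (simp add: cprod_def)

lemma cprod_sgn_left_edge: "u1 \<noteq> u2 \<Longrightarrow> sgn (cprod G H) {(u1, v), (u2, v)} = sgn G {u1, u2}"
  by (simp add: cprod_def)

lemma signed_graph_cprod:
  assumes G: "signed_graph G" and H: "signed_graph H"
  shows "signed_graph (cprod G H)"
proof -
  have "\<exists>p q. e = {p, q} \<and> p \<noteq> q \<and> p \<in> verts (cprod G H) \<and> q \<in> verts (cprod G H)
      \<and> (sgn (cprod G H) e = 1 \<or> sgn (cprod G H) e = -1)" if "e \<in> edges (cprod G H)" for e
    using that
  proof (cases rule: cprod_edgeE)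
    case (right u v1 v2)
    then show ?thesis
      using signed_graph_edgeD[OF H right(3)] signed_graph_sgn[OF H right(3)]
      by (auto simp: cprod_verts cprod_sgn_right_edge)
  next
    case (left u1 u2 v)
    then show ?thesis
      using signed_graph_edgeD[OF G left(3)] signed_graph_sgn[OF G left(3)]
      by (auto simp: cprod_verts cprod_sgn_left_edge)
  qed
  moreover have "finite (verts (cprod G H))"
    using G H by (simp add: cprod_verts signed_graph_def)
  ultimately show ?thesis
    unfolding signed_graph_def by blast
qed

lemma K2plus_simps:
  "verts K2plus = {0, 1}" "edges K2plus = {{0, 1}}" "sgn K2plus e = 1"
  by (simp_all add: K2plus_def)

lemma signed_graph_K2plus: "signed_graph K2plus"
  unfolding signed_graph_def K2plus_simps by auto

lemma signed_hom_comp: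
  assumes A: "signed_graph A" and B: "signed_graph B"
    and \<phi>: "signed_hom \<phi> A B" and \<psi>: "signed_hom \<psi> B C"
  shows "signed_hom (\<psi> \<circ> \<phi>) A C"
proof -
  obtain X where X: "X \<subseteq> verts A"
    "\<forall>e\<in>edges A. \<phi> ` e \<in> edges B \<and> sgn B (\<phi> ` e) = switch X (sgn A) e"
    using \<phi> unfolding signed_hom_def by blast
  obtain Y where Y: "\<forall>e\<in>edges B. \<psi> ` e \<in> edges C \<and> sgn C (\<psi> ` e) = switch Y (sgn B) e"
    using \<psi> unfolding signed_hom_def by blast
  define Z where "Z = {x \<in> verts A. (x \<in> X) \<noteq> (\<phi> x \<in> Y)}"
  have "(\<psi> \<circ> \<phi>) ` e \<in> edges C \<and> sgn C ((\<psi> \<circ> \<phi>) ` e) = switch Z (sgn A) e"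
    if "e \<in> edges A" for e
    using A that
  proof (cases rule: signed_graph_edgeE)
    case (1 u v)
    have B_edge: "{\<phi> u, \<phi> v} \<in> edges B"
      and B_sgn: "sgn B {\<phi> u, \<phi> v} = switch X (sgn A) {u, v}"
      using X(2) that 1 by auto
    have "\<phi> u \<noteq> \<phi> v"
      using signed_graph_edgeD[OF B B_edge] by blast
    then have C_sgn: "sgn C (\<psi> ` {\<phi> u, \<phi> v}) = (if (\<phi> u \<in> Y) = (\<phi> v \<in> Y)
        then switch X (sgn A) {u, v} else - switch X (sgn A) {u, v})"
      using Y[rule_format, OF B_edge] B_sgn switch_doubleton[of "\<phi> u" "\<phi> v" Y "sgn B"] by simp
    have "(u \<in> Z) = ((u \<in> X) \<noteq> (\<phi> u \<in> Y))" "(v \<in> Z) = ((v \<in> X) \<noteq> (\<phi> v \<in> Y))"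
      using 1 by (auto simp: Z_def)
    with C_sgn \<open>u \<noteq> v\<close> have "sgn C (\<psi> ` {\<phi> u, \<phi> v}) = switch Z (sgn A) {u, v}"
      by (cases "u \<in> X"; cases "v \<in> X"; cases "\<phi> u \<in> Y"; cases "\<phi> v \<in> Y")
        (simp_all add: switch_doubleton)
    moreover have "(\<psi> \<circ> \<phi>) ` e = \<psi> ` {\<phi> u, \<phi> v}"
      using 1 by auto
    ultimately show ?thesis
      using Y[rule_format, OF B_edge] 1 by simp
  qed
  moreover have "\<forall>v\<in>verts A. (\<psi> \<circ> \<phi>) v \<in> verts C"
    using \<phi> \<psi> unfolding signed_hom_def by auto
  moreover have "Z \<subseteq> verts A"
    by (auto simp: Z_def)
  ultimately show ?thesis
    unfolding signed_hom_def by blast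
qed

lemma chi_s_eq_if_homs:
  assumes "signed_graph A" "signed_graph B" "signed_hom \<phi> A B" "signed_hom \<psi> B A"
  shows "chi_s A = chi_s B"
proof -
  have "(\<exists>(H :: nat sgraph) \<phi>. signed_graph H \<and> verts H = {..<k} \<and> signed_hom \<phi> A H)
      \<longleftrightarrow> (\<exists>(H :: nat sgraph) \<phi>. signed_graph H \<and> verts H = {..<k} \<and> signed_hom \<phi> B H)" for k
    using signed_hom_comp[OF assms(1,2,3)] signed_hom_comp[OF assms(2,1,4)] by meson
  then show ?thesis
    unfolding chi_s_def by simp
qed

lemma chi_s_eq_2_if_hom_K2plus:
  assumes \<phi>: "signed_hom \<phi> G K2plus" and e: "e \<in> edges G"
  shows "chi_s G = 2"
  unfolding chi_s_def
proof (rule Least_equality)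
  show "\<exists>(H :: nat sgraph) \<phi>. signed_graph H \<and> verts H = {..<2} \<and> signed_hom \<phi> G H"
  proof -
    have "verts K2plus = {..<2}"
      by (auto simp: K2plus_simps)
    then show ?thesis
      using signed_graph_K2plus \<phi> by blast
  qed
next
  fix k
  assume "\<exists>(H :: nat sgraph) \<psi>. signed_graph H \<and> verts H = {..<k} \<and> signed_hom \<psi> G H"
  then obtain H :: "nat sgraph" and \<psi> where H: "signed_graph H" "verts H = {..<k}"
    and "signed_hom \<psi> G H"
    by blast
  then have "\<psi> ` e \<in> edges H"
    using e unfolding signed_hom_def by blast
  then obtain x y where "x \<noteq> y" "x < k" "y < k"
    using H by (auto elim: signed_graph_edgeE)
  then show "2 \<le> k"
    by linarith
qed

lemma signed_hom_cprod_right: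
  fixes G :: "'a sgraph" and F :: "'b sgraph" and H :: "'c sgraph"
  assumes G: "signed_graph G" and F: "signed_graph F" and H: "signed_graph H"
    and \<psi>: "signed_hom \<psi> F H"
  shows "signed_hom (\<lambda>(x, y). (x, \<psi> y)) (cprod G F) (cprod G H)"
proof -
  define \<phi> :: "'a \<times> 'b \<Rightarrow> 'a \<times> 'c" where "\<phi> = (\<lambda>(x, y). (x, \<psi> y))"
  obtain Y where Y: "Y \<subseteq> verts F"
    "\<forall>e\<in>edges F. \<psi> ` e \<in> edges H \<and> sgn H (\<psi> ` e) = switch Y (sgn F) e"
    using \<psi> unfolding signed_hom_def by blast
  define X where "X = verts G \<times> Y"
  have verts_\<phi>: "\<forall>p\<in>verts (cprod G F). \<phi> p \<in> verts (cprod G H)"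
    using \<psi> unfolding signed_hom_def \<phi>_def by (auto simp: cprod_verts)
  have "\<phi> ` e \<in> edges (cprod G H) \<and> sgn (cprod G H) (\<phi> ` e) = switch X (sgn (cprod G F)) e"
    if "e \<in> edges (cprod G F)" for e
    using that
  proof (cases rule: cprod_edgeE)
    case (right u v1 v2)
    have "v1 \<noteq> v2"
      using signed_graph_edgeD[OF F right(3)] by blast
    have H_edge: "{\<psi> v1, \<psi> v2} \<in> edges H"
      and H_sgn: "sgn H {\<psi> v1, \<psi> v2} = switch Y (sgn F) {v1, v2}"
      using Y(2) right(3) by auto
    have "\<psi> v1 \<noteq> \<psi> v2"
      using signed_graph_edgeD[OF H H_edge] by blast
    moreover have "\<phi> ` e = {(u, \<psi> v1), (u, \<psi> v2)}"
      using right(1) by (simp add: \<phi>_def)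
    ultimately show ?thesis
      using right H_edge H_sgn \<open>v1 \<noteq> v2\<close>
      by (auto simp: cprod_edges cprod_sgn_right_edge switch_doubleton X_def)
  next
    case (left u1 u2 v)
    have u12: "u1 \<noteq> u2" "u1 \<in> verts G" "u2 \<in> verts G"
      using signed_graph_edgeD[OF G left(3)] by auto
    have "\<psi> v \<in> verts H"
      using \<psi> left(2) unfolding signed_hom_def by blast
    moreover have "\<phi> ` e = {(u1, \<psi> v), (u2, \<psi> v)}"
      using left(1) by (simp add: \<phi>_def)
    ultimately show ?thesis
      using left u12
      by (auto simp: cprod_edges cprod_sgn_left_edge switch_doubleton X_def)
  qed
  moreover have "X \<subseteq> verts (cprod G F)"
    using Y(1) by (auto simp: X_def cprod_verts)
  ultimately show ?thesis
    using verts_\<phi> unfolding signed_hom_def \<phi>_def by blast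
qed

definition simple_path :: "'a sgraph \<Rightarrow> 'a list \<Rightarrow> bool" where
  "simple_path F xs \<longleftrightarrow> distinct xs \<and> set xs \<subseteq> verts F \<and>
     (\<forall>i. Suc i < length xs \<longrightarrow> {xs ! i, xs ! Suc i} \<in> edges F)"

lemma simple_path_Cons:
  assumes "simple_path F xs" "xs \<noteq> []" "w \<notin> set xs" "w \<in> verts F" "{w, hd xs} \<in> edges F"
  shows "simple_path F (w # xs)"
  using assms unfolding simple_path_def
  by (auto simp: nth_Cons hd_conv_nth split: nat.split)

lemma has_cycle_if_chord:
  assumes xs: "simple_path F xs" and j: "2 \<le> j" "j < length xs"
    and chord: "{xs ! j, xs ! 0} \<in> edges F"
  shows "has_cycle F"
  unfolding has_cycle_def
proof (intro exI conjI allI impI)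
  let ?ys = "take (Suc j) xs"
  show "3 \<le> length ?ys" "distinct ?ys" "set ?ys \<subseteq> verts F"
    using xs j set_take_subset[of "Suc j" xs] by (auto simp: simple_path_def)
  show "{?ys ! i, ?ys ! Suc i} \<in> edges F" if "Suc i < length ?ys" for i
    using xs that by (simp add: simple_path_def)
  have "last ?ys = xs ! j"
    using j by (simp add: take_Suc_conv_app_nth)
  moreover have "hd ?ys = xs ! 0"
    using j by (cases xs) auto
  ultimately show "{last ?ys, hd ?ys} \<in> edges F"
    using chord by simp
qed

lemma longest_simple_path:
  assumes F: "signed_graph F" and "edges F \<noteq> {}"
  obtains xs where "simple_path F xs" "2 \<le> length xs"
    "\<And>ys. simple_path F ys \<Longrightarrow> length ys \<le> length xs"
proof -
  obtain e where "e \<in> edges F"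
    using assms(2) by blast
  then obtain a b where "{a, b} \<in> edges F" "a \<noteq> b" "a \<in> verts F" "b \<in> verts F"
    using F by (metis signed_graph_edgeE)
  then have "simple_path F [a, b]"
    by (simp add: simple_path_def less_Suc_eq)
  moreover have "length ys < Suc (card (verts F))" if "simple_path F ys" for ys
  proof -
    have "length ys = card (set ys)"
      using that distinct_card unfolding simple_path_def by metis
    also have "\<dots> \<le> card (verts F)"
      using that F unfolding simple_path_def signed_graph_def by (meson card_mono)
    finally show ?thesis
      by simp
  qed
  ultimately obtain xs where "simple_path F xs" "\<forall>ys. simple_path F ys \<longrightarrow> length ys \<le> length xs"
    using ex_has_greatest_nat[of "simple_path F" "[a, b]" length] by blast
  moreover from this have "2 \<le> length xs"
    using \<open>simple_path F [a, b]\<close> by fastforce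
  ultimately show ?thesis
    using that by blast
qed

text \<open>The first vertex of a longest path is a leaf: a further neighbour would either extend
  the path or close a cycle with it.\<close>

lemma forest_has_leaf:
  assumes forest: "signed_forest F" and "edges F \<noteq> {}"
  obtains v u where "{v, u} \<in> edges F" "\<And>w. {v, w} \<in> edges F \<Longrightarrow> w = u"
proof -
  have F: "signed_graph F" and acyclic: "\<not> has_cycle F"
    using forest unfolding signed_forest_def by auto
  obtain xs where xs: "simple_path F xs" "2 \<le> length xs"
    and longest: "\<And>ys. simple_path F ys \<Longrightarrow> length ys \<le> length xs"
    using longest_simple_path[OF F \<open>edges F \<noteq> {}\<close>] by blast
  have "{xs ! 0, xs ! 1} \<in> edges F"
    using xs unfolding simple_path_def by auto
  moreover have "w = xs ! 1" if vw: "{xs ! 0, w} \<in> edges F" for w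
  proof (rule ccontr)
    assume "w \<noteq> xs ! 1"
    have "w \<noteq> xs ! 0" "w \<in> verts F"
      using signed_graph_edgeD[OF F vw] by auto
    have "hd xs = xs ! 0"
      using xs(2) by (cases xs) auto
    show False
    proof (cases "w \<in> set xs")
      case False
      then have "simple_path F (w # xs)"
        using xs vw \<open>w \<in> verts F\<close> \<open>hd xs = xs ! 0\<close>
        by (intro simple_path_Cons) (auto simp: insert_commute)
      then show False
        using longest by fastforce
    next
      case True
      then obtain j where j: "j < length xs" "xs ! j = w"
        by (meson in_set_conv_nth)
      moreover have "j \<noteq> 0" "j \<noteq> 1"
        using j \<open>w \<noteq> xs ! 0\<close> \<open>w \<noteq> xs ! 1\<close> by metis+
      ultimately have "has_cycle F"
        using xs vw by (intro has_cycle_if_chord[of F xs j]) (auto simp: insert_commute)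
      then show False
        using acyclic by blast
    qed
  qed
  ultimately show ?thesis
    using that by blast
qed

lemma signed_forest_delete_edge:
  assumes "signed_forest F"
  shows "signed_forest (F\<lparr>edges := edges F - {e}\<rparr>)"
proof -
  have "has_cycle F" if "has_cycle (F\<lparr>edges := edges F - {e}\<rparr>)"
    using that unfolding has_cycle_def by auto
  then show ?thesis
    using assms unfolding signed_forest_def signed_graph_def by auto
qed

lemma forest_edge_labelling:
  fixes F :: "'a sgraph" and w :: "'a set \<Rightarrow> bool"
  assumes "signed_forest F"
  shows "\<exists>l :: 'a \<Rightarrow> bool. \<forall>u v. {u, v} \<in> edges F \<longrightarrow> (l u \<noteq> l v) = w {u, v}"
  using assms
proof (induction "card (edges F)" arbitrary: F rule: less_induct)
  case less
  show ?case
  proof (cases "edges F = {}")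
    case True
    then show ?thesis
      by simp
  next
    case False
    have F: "signed_graph F"
      using less.prems unfolding signed_forest_def by blast
    obtain v u where vu: "{v, u} \<in> edges F" and leaf: "\<And>w. {v, w} \<in> edges F \<Longrightarrow> w = u"
      using forest_has_leaf[OF less.prems False] by blast
    define F' where "F' = F\<lparr>edges := edges F - {{v, u}}\<rparr>"
    have "card (edges F') < card (edges F)"
      using vu False signed_graph_finite_edges[OF F] by (simp add: F'_def card_gt_0_iff)
    moreover have "signed_forest F'"
      unfolding F'_def by (rule signed_forest_delete_edge[OF less.prems])
    ultimately obtain l :: "'a \<Rightarrow> bool"
      where l: "\<forall>x y. {x, y} \<in> edges F' \<longrightarrow> (l x \<noteq> l y) = w {x, y}"
      using less.hyps by blast
    have "v \<noteq> u"
      using signed_graph_edgeD[OF F vu] by blast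
    define l' where "l' = l(v := (l u \<noteq> w {v, u}))"
    have "(l' x \<noteq> l' y) = w {x, y}" if xy: "{x, y} \<in> edges F" for x y
    proof (cases "{x, y} = {v, u}")
      case True
      then show ?thesis
        using \<open>v \<noteq> u\<close> by (auto simp: l'_def doubleton_eq_iff insert_commute)
    next
      case False
      have "x \<noteq> v" "y \<noteq> v"
        using leaf[of y] leaf[of x] xy False by (auto simp: insert_commute)
      moreover have "{x, y} \<in> edges F'"
        using xy False by (simp add: F'_def)
      ultimately show ?thesis
        using l by (simp add: l'_def)
    qed
    then show ?thesis
      by blast
  qed
qed

text \<open>A proper 2-colouring \<open>c\<close> together with a switching set \<open>s\<close> making every edge
  positive: the data of a homomorphism to \<^const>\<open>K2plus\<close>.\<close>

definition balanced_bipartition :: "'a sgraph \<Rightarrow> ('a \<Rightarrow> bool) \<Rightarrow> ('a \<Rightarrow> bool) \<Rightarrow> bool" where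
  "balanced_bipartition G c s \<longleftrightarrow>
     (\<forall>u v. {u, v} \<in> edges G \<longrightarrow> c u \<noteq> c v \<and> (s u \<noteq> s v \<longleftrightarrow> sgn G {u, v} = -1))"

lemma signed_hom_K2plus_if_balanced_bipartition:
  assumes G: "signed_graph G" and cs: "balanced_bipartition G c s"
  shows "signed_hom (\<lambda>v. if c v then 1 else 0) G K2plus"
proof -
  define X where "X = {v \<in> verts G. s v}"
  have "(\<lambda>v. if c v then 1 else 0) ` e \<in> edges K2plus
      \<and> sgn K2plus ((\<lambda>v. if c v then 1 else 0) ` e) = switch X (sgn G) e"
    if "e \<in> edges G" for e
    using G that
  proof (cases rule: signed_graph_edgeE)
    case (1 u v)
    then have uv: "{u, v} \<in> edges G"
      using that by simp
    then have "c u \<noteq> c v" "s u \<noteq> s v \<longleftrightarrow> sgn G {u, v} = -1"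
      using cs unfolding balanced_bipartition_def by blast+
    moreover have "sgn G {u, v} = 1 \<or> sgn G {u, v} = -1"
      using signed_graph_sgn[OF G uv] .
    ultimately show ?thesis
      using 1 by (auto simp: K2plus_simps switch_doubleton X_def)
  qed
  moreover have "X \<subseteq> verts G"
    by (simp add: X_def)
  moreover have "\<forall>v\<in>verts G. (if c v then 1 else 0) \<in> verts K2plus"
    by (simp add: K2plus_simps)
  ultimately show ?thesis
    unfolding signed_hom_def by blast
qed

lemma forest_balanced_bipartition:
  fixes F :: "'a sgraph"
  assumes "signed_forest F"
  obtains c s where "balanced_bipartition F c s"
proof -
  obtain c :: "'a \<Rightarrow> bool" where c: "\<forall>u v. {u, v} \<in> edges F \<longrightarrow> c u \<noteq> c v"
    using forest_edge_labelling[OF assms, of "\<lambda>_. True"] by auto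
  obtain s :: "'a \<Rightarrow> bool"
    where s: "\<forall>u v. {u, v} \<in> edges F \<longrightarrow> (s u \<noteq> s v) = (sgn F {u, v} = -1)"
    using forest_edge_labelling[OF assms, of "\<lambda>e. sgn F e = -1"] by auto
  show ?thesis
    by (rule that[of c s]) (use c s in \<open>simp add: balanced_bipartition_def\<close>)
qed

lemma signed_hom_K2plus_edge:
  assumes F: "signed_graph F" and ab: "{a, b} \<in> edges F"
  shows "signed_hom (\<lambda>i. if i = 0 then a else b) K2plus F"
proof -
  define X :: "nat set" where "X = (if sgn F {a, b} = -1 then {1} else {})"
  have "(\<lambda>i :: nat. if i = 0 then a else b) ` {0, 1} = {a, b}"
    by auto
  moreover have "switch X (sgn K2plus) {0, 1} = sgn F {a, b}"
    using signed_graph_sgn[OF F ab] by (auto simp: switch_doubleton K2plus_simps X_def)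
  ultimately have "\<forall>e\<in>edges K2plus. (\<lambda>i. if i = 0 then a else b) ` e \<in> edges F
      \<and> sgn F ((\<lambda>i. if i = 0 then a else b) ` e) = switch X (sgn K2plus) e"
    using ab by (simp add: K2plus_simps)
  moreover have "X \<subseteq> verts K2plus"
    by (simp add: X_def K2plus_simps)
  moreover have "\<forall>i\<in>verts K2plus. (if i = 0 then a else b) \<in> verts F"
    using signed_graph_edgeD[OF F ab] by simp
  ultimately show ?thesis
    unfolding signed_hom_def by blast
qed

lemma balanced_bipartition_cprod:
  assumes G: "signed_graph G" and H: "signed_graph H"
    and cs1: "balanced_bipartition G c1 s1" and cs2: "balanced_bipartition H c2 s2"
  shows "balanced_bipartition (cprod G H) (\<lambda>(x, y). c1 x \<noteq> c2 y) (\<lambda>(x, y). s1 x \<noteq> s2 y)"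
    (is "balanced_bipartition _ ?c ?s")
proof -
  let ?P = "\<lambda>p q. ?c p \<noteq> ?c q \<and> (?s p \<noteq> ?s q \<longleftrightarrow> sgn (cprod G H) {p, q} = -1)"
  have right_edge: "?P (u, v1) (u, v2)" if "{v1, v2} \<in> edges H" for u v1 v2
    using that cs2 signed_graph_edgeD[OF H that]
    by (auto simp: balanced_bipartition_def cprod_sgn_right_edge)
  have left_edge: "?P (u1, v) (u2, v)" if "{u1, u2} \<in> edges G" for u1 u2 v
    using that cs1 signed_graph_edgeD[OF G that]
    by (auto simp: balanced_bipartition_def cprod_sgn_left_edge)
  have "?P p q" if "{p, q} \<in> edges (cprod G H)" for p q
    using that
  proof (cases rule: cprod_edgeE)
    case (right u v1 v2)
    then show ?thesis
      using right_edge[of v1 v2 u] right_edge[of v2 v1 u]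
      by (auto simp: doubleton_eq_iff insert_commute)
  next
    case (left u1 u2 v)
    then show ?thesis
      using left_edge[of u1 u2 v] left_edge[of u2 u1 v]
      by (auto simp: doubleton_eq_iff insert_commute)
  qed
  then show ?thesis
    unfolding balanced_bipartition_def by blast
qed

primrec path_neg_parity :: "(nat set \<Rightarrow> int) \<Rightarrow> nat \<Rightarrow> bool" where
  "path_neg_parity s 0 = False"
| "path_neg_parity s (Suc i) = (path_neg_parity s i \<noteq> (s {i, Suc i} = -1))"

lemma balanced_bipartition_path_sg:
  "balanced_bipartition (path_sg n s) odd (path_neg_parity s)"
  by (auto simp: balanced_bipartition_def path_sg_def doubleton_eq_iff insert_commute)

lemma chi_s_cprod_path_sg:
  assumes "0 < n" "2 \<le> m" and P: "signed_graph (path_sg n s1)" "signed_graph (path_sg m s2)"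
  shows "chi_s (cprod (path_sg n s1) (path_sg m s2)) = 2"
proof -
  have "balanced_bipartition (cprod (path_sg n s1) (path_sg m s2))
      (\<lambda>(x, y). odd x \<noteq> odd y) (\<lambda>(x, y). path_neg_parity s1 x \<noteq> path_neg_parity s2 y)"
    using P by (intro balanced_bipartition_cprod balanced_bipartition_path_sg)
  then have "signed_hom (\<lambda>v. if (case v of (x, y) \<Rightarrow> odd x \<noteq> odd y) then 1 else 0)
      (cprod (path_sg n s1) (path_sg m s2)) K2plus"
    by (rule signed_hom_K2plus_if_balanced_bipartition[OF signed_graph_cprod[OF P]])
  moreover have "{(0, 0), (0, 1)} \<in> edges (cprod (path_sg n s1) (path_sg m s2))"
  proof -
    have "{0, 1} \<in> edges (path_sg m s2)"
      using \<open>2 \<le> m\<close> unfolding path_sg_def by force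
    moreover have "0 \<in> verts (path_sg n s1)"
      using \<open>0 < n\<close> by (simp add: path_sg_def)
    ultimately show ?thesis
      unfolding cprod_edges by blast
  qed
  ultimately show ?thesis
    by (rule chi_s_eq_2_if_hom_K2plus)
qed

lemma chi_s_cprod_forest:
  fixes G :: "'a sgraph" and F :: "'b sgraph"
  assumes G: "signed_graph G" and forest: "signed_forest F" and "edges F \<noteq> {}"
  shows "chi_s (cprod G F) = chi_s (cprod G K2plus)"
proof -
  note K2 = signed_graph_K2plus
  have F: "signed_graph F"
    using forest unfolding signed_forest_def by blast
  obtain e where "e \<in> edges F"
    using \<open>edges F \<noteq> {}\<close> by blast
  then obtain a b where ab: "{a, b} \<in> edges F"
    using F by (metis signed_graph_edgeE)
  obtain c s where "balanced_bipartition F c s"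
    using forest_balanced_bipartition[OF forest] .
  then have to_K2: "signed_hom (\<lambda>v. if c v then 1 else 0) F K2plus"
    by (rule signed_hom_K2plus_if_balanced_bipartition[OF F])
  have from_K2: "signed_hom (\<lambda>i. if i = 0 then a else b) K2plus F"
    by (rule signed_hom_K2plus_edge[OF F ab])
  show ?thesis
    using chi_s_eq_if_homs[OF signed_graph_cprod[OF G F] signed_graph_cprod[OF G K2]
        signed_hom_cprod_right[OF G F K2 to_K2] signed_hom_cprod_right[OF G K2 F from_K2]] .
qed

theorem corollary4p4:
  fixes G :: "'a sgraph" and F :: "'b sgraph"
  assumes "signed_graph G"
    and "signed_forest F"
    and "edges F \<noteq> {}"
  shows "chi_s (cprod G F) = chi_s (cprod G K2plus) \<and>
    (\<forall>n m s1 s2. n \<ge> 2 \<and> m \<ge> 2 \<and> signed_graph (path_sg n s1) \<and> signed_graph (path_sg m s2)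
        \<longrightarrow> chi_s (cprod (path_sg n s1) (path_sg m s2)) = 2)"
  using chi_s_cprod_forest[OF assms] chi_s_cprod_path_sg by auto

end
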